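(* For all integers $0<i<j$, $Q^i<Q^j$ as unifiers of $[1]p$ in $\mathbf{GLP}$, where $Q^i$ denotes the substitution $p\mapsto Q^i(p)$; that is, $Q^i\leq Q^j$ but not $Q^j\leq Q^i$.
   Context: $\mathbf{GLP}$ is the propositional polymodal logic with modalities $[0],[1],\dots$ ($\langle k\rangle:=\neg[k]\neg$) axiomatized by classical tautologies; $[k](\phi\to\psi)\to([k]\phi\to[k]\psi)$; $[k]([k]\phi\to\phi)\to[k]\phi$; $\langle j\rangle\phi\to[k]\langle j\rangle\phi$ for $j<k$; $[j]\phi\to[k]\phi$ for $j\leq k$; rules modus ponens and necessitation. A substitution commutes with all connectives and modalities. $\tau\leq\sigma$ means there is a substitution $\theta$ with $\mathbf{GLP}\vdash\tau(q)\leftrightarrow\theta(\sigma(q))$ for every variable $q$; $\sigma<\tau$ means $\sigma\leq\tau$ and not $\tau\leq\sigma$. Define $Q_1(p):=p$, $Q_{i+1}(p):=p\lor[0]Q_i(p)$, $Q^n(p):=\bigwedge_{i=1}^n([0]Q_i(p)\to Q_i(p))$. *)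

theory Defs
  imports Main
begin

datatype form = Var nat | Bot | Imp form form | Box nat form

definition Neg :: "form \<Rightarrow> form" where "Neg a = Imp a Bot"
definition Top :: form where "Top = Imp Bot Bot"
definition Or :: "form \<Rightarrow> form \<Rightarrow> form" where "Or a b = Imp (Neg a) b"
definition And :: "form \<Rightarrow> form \<Rightarrow> form" where "And a b = Neg (Imp a (Neg b))"
definition Iff :: "form \<Rightarrow> form \<Rightarrow> form" where "Iff a b = And (Imp a b) (Imp b a)"
definition Dia :: "nat \<Rightarrow> form \<Rightarrow> form" where "Dia k a = Neg (Box k (Neg a))"

fun peval :: "(form \<Rightarrow> bool) \<Rightarrow> form \<Rightarrow> bool" where
  "peval v (Var n) = v (Var n)"
| "peval v Bot = False"
| "peval v (Imp a b) = (peval v a \<longrightarrow> peval v b)"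
| "peval v (Box k a) = v (Box k a)"

definition taut :: "form \<Rightarrow> bool" where "taut a \<longleftrightarrow> (\<forall>v. peval v a)"

inductive GLP :: "form \<Rightarrow> bool" where
  tautology: "taut a \<Longrightarrow> GLP a"
| K: "GLP (Imp (Box k (Imp a b)) (Imp (Box k a) (Box k b)))"
| Loeb: "GLP (Imp (Box k (Imp (Box k a) a)) (Box k a))"
| neg_intro: "j < k \<Longrightarrow> GLP (Imp (Dia j a) (Box k (Dia j a)))"
| mono: "j \<le> k \<Longrightarrow> GLP (Imp (Box j a) (Box k a))"
| MP: "GLP (Imp a b) \<Longrightarrow> GLP a \<Longrightarrow> GLP b"
| Nec: "GLP a \<Longrightarrow> GLP (Box k a)"

type_synonym subst = "nat \<Rightarrow> form"

fun subst_app :: "subst \<Rightarrow> form \<Rightarrow> form" where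
  "subst_app s (Var n) = s n"
| "subst_app s Bot = Bot"
| "subst_app s (Imp a b) = Imp (subst_app s a) (subst_app s b)"
| "subst_app s (Box k a) = Box k (subst_app s a)"

definition subst_le :: "subst \<Rightarrow> subst \<Rightarrow> bool" where
  "subst_le \<tau> \<sigma> \<longleftrightarrow> (\<exists>\<theta>. \<forall>q. GLP (Iff (\<tau> q) (subst_app \<theta> (\<sigma> q))))"

definition subst_less :: "subst \<Rightarrow> subst \<Rightarrow> bool" where
  "subst_less \<sigma> \<tau> \<longleftrightarrow> subst_le \<sigma> \<tau> \<and> \<not> subst_le \<tau> \<sigma>"

text \<open>The distinguished variable p is \<open>Var 0\<close>.\<close>

fun Qi :: "nat \<Rightarrow> form \<Rightarrow> form" where
  "Qi 0 p = p"   \<comment> \<open>unused index; only \<open>Qi i\<close> for \<open>i \<ge> 1\<close> matters\<close>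
| "Qi (Suc 0) p = p"
| "Qi (Suc (Suc i)) p = Or p (Box 0 (Qi (Suc i) p))"

fun Qup :: "nat \<Rightarrow> form \<Rightarrow> form" where
  "Qup 0 p = Top"
| "Qup (Suc n) p = And (Qup n p) (Imp (Box 0 (Qi (Suc n) p)) (Qi (Suc n) p))"

definition Qsubst :: "nat \<Rightarrow> subst" where
  "Qsubst n = (\<lambda>q. if q = 0 then Qup n (Var 0) else Var q)"

end

theory Submission
  imports Defs
begin

text \<open>The substitution \<open>p \<mapsto> Q\<^sup>i(p)\<close> is an instance of \<open>p \<mapsto> Q\<^sup>j(p)\<close> via \<open>\<theta>(p) = Q\<^sup>i(p)\<close>,
  because \<open>Q\<^sup>i(p)\<close> is, provably in GLP, a fixed point of \<open>Q\<^sup>j\<close>: if \<open>Q\<^sup>i(p)\<close> fails then \<open>[0]Q\<^sub>i(p)\<close>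
  holds, hence \<open>[0]Q\<^sub>i(Q\<^sup>i(p))\<close>, and then the conjuncts of \<open>Q\<^sup>i(Q\<^sup>i(p))\<close> cannot all hold.

  For strictness, evaluate formulas in the GLP-model on the naturals in which \<open>[0]\<close> looks at all
  smaller numbers and \<open>p\<close> is false everywhere. There \<open>Q\<^sup>j(p)\<close> fails at exactly \<open>j\<close> points, whereas
  any formula \<open>Q\<^sup>i(\<psi>)\<close> fails at no more than \<open>i\<close> points: a point where it fails is the least
  point where some \<open>Q\<^sub>k(\<psi>)\<close>, \<open>1 \<le> k \<le> i\<close>, fails.\<close>

lemma peval_derived_simps [simp]:
  "peval v (Neg a) = (\<not> peval v a)"
  "peval v Top = True"
  "peval v (Or a b) = (peval v a \<or> peval v b)"
  "peval v (And a b) = (peval v a \<and> peval v b)"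
  "peval v (Iff a b) = (peval v a = peval v b)"
  by (auto simp: Neg_def Top_def Or_def And_def Iff_def)

lemma GLP_tautological_consequence:
  "\<forall>h\<in>set hs. GLP h \<Longrightarrow> (\<And>v. \<forall>h\<in>set hs. peval v h \<Longrightarrow> peval v c) \<Longrightarrow> GLP c"
proof (induction hs arbitrary: c)
  case Nil
  then show ?case by (auto intro: GLP.tautology simp: taut_def)
next
  case (Cons h hs)
  have "GLP (Imp h c)"
    using Cons.prems by (intro Cons.IH) auto
  then show ?case
    using Cons.prems(1) by (auto intro: GLP.MP)
qed

lemma GLP_taut: "(\<And>v. peval v c) \<Longrightarrow> GLP c"
  by (rule GLP_tautological_consequence[of "[]"]) auto

lemma GLP_box_mono: "GLP (Imp a b) \<Longrightarrow> GLP (Imp (Box k a) (Box k b))"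
  by (rule GLP.MP[OF GLP.K GLP.Nec])

lemma peval_Qi_if_peval: "peval v p \<Longrightarrow> peval v (Qi k p)"
  by (induction k p rule: Qi.induct) auto

lemma GLP_Qi_imp_Qi_Suc: "GLP (Imp (Qi k p) (Qi (Suc k) p))"
proof (induction k p rule: Qi.induct)
  case (3 k p)
  have "GLP (Imp (Box 0 (Qi (Suc k) p)) (Box 0 (Qi (Suc (Suc k)) p)))"
    using GLP_box_mono[OF 3] .
  then show ?case
    by (intro GLP_tautological_consequence[of "[Imp (Box 0 (Qi (Suc k) p)) (Box 0 (Qi (Suc (Suc k)) p))]"])
      auto
qed (auto intro: GLP_taut)

lemma GLP_Qi_mono: "GLP (Imp a b) \<Longrightarrow> GLP (Imp (Qi k a) (Qi k b))"
proof (induction k a rule: Qi.induct)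
  case (3 k a)
  have "GLP (Imp (Box 0 (Qi (Suc k) a)) (Box 0 (Qi (Suc k) b)))"
    using GLP_box_mono[OF 3(1)[OF 3(2)]] .
  then show ?case
    by (intro GLP_tautological_consequence[of "[Imp (Box 0 (Qi (Suc k) a)) (Box 0 (Qi (Suc k) b)), Imp a b]"])
      (use 3(2) in auto)
qed simp_all

lemma peval_Qup_if_peval: "peval v p \<Longrightarrow> peval v (Qup n p)"
  by (induction n) (auto intro: peval_Qi_if_peval)

lemma peval_Qup_antimono: "i \<le> j \<Longrightarrow> peval v (Qup j p) \<Longrightarrow> peval v (Qup i p)"
  by (induction j) (auto simp: le_Suc_eq)

lemma not_peval_Qup:
  assumes "1 \<le> n" and "v (Box 0 (Qi n p))" and "\<not> peval v p"
  shows "\<not> peval v (Qup n p)"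
  using assms
proof (induction n rule: nat_induct_at_least)
  case (Suc n)
  text \<open>Either \<open>[0]Q\<^sub>n(p)\<close> holds and the induction hypothesis applies, or \<open>Q\<^sub>n\<^sub>+\<^sub>1(p)\<close> fails,
    and with it the last conjunct of \<open>Q\<^sup>n\<^sup>+\<^sup>1(p)\<close>.\<close>
  obtain m where "n = Suc m"
    using Suc.hyps by (cases n) auto
  then show ?case
    using Suc by auto
qed simp

lemma GLP_not_box_Qi_imp_Qup: "GLP (Imp (Neg (Box 0 (Qi n p))) (Qup n p))"
proof (induction n)
  case (Suc n)
  have "GLP (Imp (Box 0 (Qi n p)) (Box 0 (Qi (Suc n) p)))"
    by (rule GLP_box_mono[OF GLP_Qi_imp_Qi_Suc])
  then show ?case
    by (intro GLP_tautological_consequence[of "[Imp (Neg (Box 0 (Qi n p))) (Qup n p),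
        Imp (Box 0 (Qi n p)) (Box 0 (Qi (Suc n) p))]"]) (use Suc.IH in auto)
qed (auto intro: GLP_taut)

lemma GLP_Qup_fixpoint:
  assumes "1 \<le> i" and "i \<le> j"
  shows "GLP (Iff (Qup i p) (Qup j (Qup i p)))"
proof -
  let ?A = "Qup i p"
  have "GLP (Imp p ?A)"
    by (rule GLP_taut) (simp add: peval_Qup_if_peval)
  then have box: "GLP (Imp (Box 0 (Qi i p)) (Box 0 (Qi i ?A)))"
    by (intro GLP_box_mono GLP_Qi_mono)
  have "peval v (Iff ?A (Qup j ?A))"
    if "peval v (Imp (Box 0 (Qi i p)) (Box 0 (Qi i ?A)))"
      and "peval v (Imp (Neg (Box 0 (Qi i p))) ?A)" for v
  proof (cases "peval v ?A")
    case True
    then show ?thesis by (simp add: peval_Qup_if_peval)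
  next
    case False
    with that have "v (Box 0 (Qi i ?A))" by auto
    then have "\<not> peval v (Qup i ?A)"
      using not_peval_Qup[of i v ?A] False assms(1) by auto
    then show ?thesis
      using False peval_Qup_antimono[OF assms(2)] by auto
  qed
  then show ?thesis
    using box GLP_not_box_Qi_imp_Qup[of i p]
    by (intro GLP_tautological_consequence[of "[Imp (Box 0 (Qi i p)) (Box 0 (Qi i ?A)),
        Imp (Neg (Box 0 (Qi i p))) ?A]"]) auto
qed

lemma subst_app_Qi: "subst_app \<theta> (Qi k p) = Qi k (subst_app \<theta> p)"
  by (induction k p rule: Qi.induct) (simp_all add: Or_def Neg_def)

lemma subst_app_Qup: "subst_app \<theta> (Qup n p) = Qup n (subst_app \<theta> p)"
  by (induction n) (simp_all add: And_def Neg_def Top_def subst_app_Qi)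

lemma subst_le_Qsubst:
  assumes "0 < i" and "i \<le> j"
  shows "subst_le (Qsubst i) (Qsubst j)"
proof -
  have "GLP (Iff (Qsubst i q) (subst_app (Qsubst i) (Qsubst j q)))" for q
    using GLP_Qup_fixpoint[of i j "Var 0"] assms
    by (cases "q = 0") (auto simp: Qsubst_def subst_app_Qup intro: GLP_taut)
  then show ?thesis
    unfolding subst_le_def by blast
qed

text \<open>\<open>[0]\<close> is read along the well-founded relation \<open><\<close> and every \<open>[k]\<close>, \<open>k > 0\<close>, along the
  empty relation; \<open>V n w\<close> is the truth value of \<open>Var n\<close> at \<open>w\<close>.\<close>

fun sat :: "(nat \<Rightarrow> nat \<Rightarrow> bool) \<Rightarrow> nat \<Rightarrow> form \<Rightarrow> bool" where
  "sat V w (Var n) = V n w"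
| "sat V w Bot = False"
| "sat V w (Imp a b) = (sat V w a \<longrightarrow> sat V w b)"
| "sat V w (Box k a) = (k = 0 \<longrightarrow> (\<forall>u<w. sat V u a))"

lemma sat_derived_simps [simp]:
  "sat V w (Neg a) = (\<not> sat V w a)"
  "sat V w Top = True"
  "sat V w (Or a b) = (sat V w a \<or> sat V w b)"
  "sat V w (And a b) = (sat V w a \<and> sat V w b)"
  "sat V w (Iff a b) = (sat V w a = sat V w b)"
  "sat V w (Dia k a) = (k = 0 \<and> (\<exists>u<w. sat V u a))"
  by (auto simp: Neg_def Top_def Or_def And_def Iff_def Dia_def)

lemma peval_sat: "peval (sat V w) a = sat V w a"
  by (induction a) auto

lemma Loeb_less_nat:
  assumes "\<forall>u<w. (\<forall>v<u. P v) \<longrightarrow> P u"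
  shows "\<forall>u<w. P (u::nat)"
proof (intro allI impI)
  show "P u" if "u < w" for u
    using that
  proof (induction u rule: less_induct)
    case (less u)
    then show ?case using assms by (meson less_trans)
  qed
qed

lemma GLP_sound: "GLP a \<Longrightarrow> sat V w a"
proof (induction arbitrary: w rule: GLP.induct)
  case (tautology a)
  then have "peval (sat V w) a" by (simp add: taut_def)
  then show ?case by (simp only: peval_sat)
next
  case Loeb
  show ?case by (auto intro: Loeb_less_nat[rule_format])
qed simp_all

lemma sat_Qi_Suc_if_never:
  assumes "\<forall>u. \<not> sat V u p"
  shows "sat V w (Qi (Suc k) p) = (w < k)"
proof (induction k arbitrary: w)
  case (Suc k)
  then show ?case
    using assms by (auto simp: less_Suc_eq_le dest: spec[of _ "w - 1"])
qed (simp add: assms)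

lemma sat_Qup_if_never:
  assumes "\<forall>u. \<not> sat V u p"
  shows "sat V w (Qup n p) = (n \<le> w)"
  by (induction n) (auto simp: sat_Qi_Suc_if_never[OF assms] less_Suc_eq_le dest: spec[of _ "w - 1"])

lemma not_sat_Qup_imp_Least:
  "\<not> sat V w (Qup n \<psi>) \<Longrightarrow> \<exists>k\<in>{1..n}. w = (LEAST u. \<not> sat V u (Qi k \<psi>))"
proof (induction n)
  case (Suc n)
  show ?case
  proof (cases "sat V w (Qup n \<psi>)")
    case False
    then show ?thesis using Suc.IH by force
  next
    case True
    then have "\<forall>u<w. sat V u (Qi (Suc n) \<psi>)" and "\<not> sat V w (Qi (Suc n) \<psi>)"
      using Suc.prems by auto
    then have "w = (LEAST u. \<not> sat V u (Qi (Suc n) \<psi>))"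
      by (metis (mono_tags) LeastI Least_le le_neq_implies_less)
    then show ?thesis by force
  qed
qed simp

lemma card_not_sat_Qup_le: "card {w. \<not> sat V w (Qup n \<psi>)} \<le> n"
proof -
  let ?first_failure = "\<lambda>k. LEAST u. \<not> sat V u (Qi k \<psi>)"
  have "{w. \<not> sat V w (Qup n \<psi>)} \<subseteq> ?first_failure ` {1..n}"
    using not_sat_Qup_imp_Least by blast
  then have "card {w. \<not> sat V w (Qup n \<psi>)} \<le> card (?first_failure ` {1..n})"
    by (intro card_mono) auto
  also have "\<dots> \<le> n"
    using card_image_le[of "{1..n}" ?first_failure] by simp
  finally show ?thesis .
qed

lemma GLP_Iff_Qup_imp_le:
  assumes "GLP (Iff (Qup j (Var q)) (Qup i \<psi>))"
  shows "j \<le> i"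
proof -
  let ?V = "\<lambda>_ _. False"
  have "\<not> sat ?V w (Qup i \<psi>) \<longleftrightarrow> w < j" for w
  proof -
    have "sat ?V w (Qup j (Var q)) \<longleftrightarrow> j \<le> w"
      by (rule sat_Qup_if_never) simp
    then show ?thesis
      using GLP_sound[OF assms, of ?V w] by auto
  qed
  then have "{w. \<not> sat ?V w (Qup i \<psi>)} = {..<j}"
    by blast
  then show ?thesis
    using card_not_sat_Qup_le[of ?V i \<psi>] by simp
qed

lemma not_subst_le_Qsubst:
  assumes "i < j"
  shows "\<not> subst_le (Qsubst j) (Qsubst i)"
proof
  assume "subst_le (Qsubst j) (Qsubst i)"
  then obtain \<theta> where "GLP (Iff (Qsubst j 0) (subst_app \<theta> (Qsubst i 0)))"
    unfolding subst_le_def by blast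
  then have "GLP (Iff (Qup j (Var 0)) (Qup i (\<theta> 0)))"
    by (simp add: Qsubst_def subst_app_Qup)
  then have "j \<le> i"
    by (rule GLP_Iff_Qup_imp_le)
  with assms show False by simp
qed

theorem mainTheorem14:
  fixes i j :: nat
  assumes "0 < i" and "i < j"
  shows "subst_less (Qsubst i) (Qsubst j)"
  unfolding subst_less_def
  using subst_le_Qsubst[OF assms(1) less_imp_le[OF assms(2)]] not_subst_le_Qsubst[OF assms(2)]
  by blast

end
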